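(* Let $\mathcal{K}=(\mathcal{R},\mathcal{T})$ be an ME-consistent $\mathcal{ALCP}$ knowledge base over $\mathcal{L}$, let $C,D$ be concepts, let $\phi\in\mathcal{L}$ be a consequence formula for $C\sqsubseteq D$ w.r.t. $\mathcal{T}$, let $\psi\in\mathcal{L}$ be a consequence formula for the strong non-subsumption of $C$ by $D$ w.r.t. $\mathcal{T}$, and let $\kappa\in\mathcal{L}$. Then $\mathcal{B}^{s}_{\mathcal{K}}(C\sqsubseteq D\mid\kappa)=P^{ME}_{\mathcal{R}}(\phi\mid\kappa)$ and $\mathcal{B}^{c}_{\mathcal{K}}(C\sqsubseteq D\mid\kappa)=1-P^{ME}_{\mathcal{R}}(\psi\mid\kappa)$.
   Context: $\mathcal{L}$ is a propositional language over a finite set of variables; $\mathrm{Int}(\mathcal{L})$ is the set of truth assignments. A probability distribution over $\mathcal{L}$ is $P:\mathrm{Int}(\mathcal{L})\to[0,1]$ summing to $1$, with $P(\phi)=\sum_{v\models\phi}P(v)$ and $P(\phi\mid\kappa)=P(\phi\wedge\kappa)/P(\kappa)$. A probabilistic constraint is $c_0+\sum_{i=1}^k c_i\,\mathsf{p}(\phi_i)\ge 0$ ($c_i\in\mathbb{R}$, $\phi_i\in\mathcal{L}$), satisfied by $P$ iff $c_0+\sum_ic_iP(\phi_i)\ge0$; $\mathrm{Mod}(\mathcal{R})$ is the set of distributions satisfying all constraints in $\mathcal{R}$; for consistent $\mathcal{R}$, $P^{ME}_{\mathcal{R}}$ is the unique maximizer in $\mathrm{Mod}(\mathcal{R})$ of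 $H(P)=-\sum_vP(v)\log P(v)$. Concepts: $C::=A\mid\neg C\mid C\sqcap C\mid\exists r.C$. An $\mathcal{L}$-GCI is $\langle C\sqsubseteq D:\kappa\rangle$, $\kappa\in\mathcal{L}$; an $\mathcal{L}$-TBox is a finite set of them; a KB is $\mathcal{K}=(\mathcal{R},\mathcal{T})$. A possible world $\mathcal{I}=(\Delta^{\mathcal{I}},\cdot^{\mathcal{I}},v^{\mathcal{I}})$ is a classical $\mathcal{ALC}$ interpretation together with $v^{\mathcal{I}}\in\mathrm{Int}(\mathcal{L})$; it models $\langle C\sqsubseteq D:\kappa\rangle$ iff $v^{\mathcal{I}}\not\models\kappa$ or $C^{\mathcal{I}}\subseteq D^{\mathcal{I}}$. For $w\in\mathrm{Int}(\mathcal{L})$, $\mathcal{T}_w=\{C\sqsubseteq D\mid\langle C\sqsubseteq D:\kappa\rangle\in\mathcal{T}, w\models\kappa\}$; $\mathcal{T}_w\models C\sqsubseteq D$ means $C^{\mathcal{I}}\subseteq D^{\mathcal{I}}$ in every classical interpretation satisfying all inclusions of $\mathcal{T}_w$; $C$ is strongly non-subsumed by $D$ w.r.t. $\mathcal{T}_w$ iff $C^{\mathcal{I}}\not\subseteq D^{\mathcal{I}}$ in every such interpretation. A formula $\phi$ is a consequence formula for $C\sqsubseteq D$ (resp. for strong non-subsumption of $C$ by $D$) w.r.t. $\mathcal{T}$ iff for every $w\in\mathrm{Int}(\mathcal{L})$: $w\models\phi$ iff $\mathcal{T}_w\models C\sqsubseteq D$ (resp. iff $C$ is strongly non-subsumed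 by $D$ w.r.t. $\mathcal{T}_w$). An $\mathcal{ALCP}$-interpretation $\mathcal{P}=(\mathfrak{I},P_{\mathfrak{I}})$ is a nonempty finite set of possible worlds with a probability distribution on it; $P^{\mathcal{P}}(v)=\sum_{\mathcal{I}\in\mathfrak{I},v^{\mathcal{I}}=v}P_{\mathfrak{I}}(\mathcal{I})$. $\mathcal{P}$ is an ME-$\mathcal{ALCP}$-model of $\mathcal{K}$ iff all its worlds model every GCI of $\mathcal{T}$ and $P^{\mathcal{P}}=P^{ME}_{\mathcal{R}}$; $\mathrm{Mod}_{ME}(\mathcal{K})$ is the set of these; $\mathcal{K}$ is ME-consistent iff it is nonempty. $\Pr_{\mathcal{P}}(C\sqsubseteq D\mid\kappa)=\big(\sum_{\mathcal{I}\in\mathfrak{I},v^{\mathcal{I}}\models\kappa,C^{\mathcal{I}}\subseteq D^{\mathcal{I}}}P_{\mathfrak{I}}(\mathcal{I})\big)/\big(\sum_{\mathcal{I}\in\mathfrak{I},v^{\mathcal{I}}\models\kappa}P_{\mathfrak{I}}(\mathcal{I})\big)$. $\mathcal{B}^{s}_{\mathcal{K}}(C\sqsubseteq D\mid\kappa)$ and $\mathcal{B}^{c}_{\mathcal{K}}(C\sqsubseteq D\mid\kappa)$ are the infimum and supremum of $\Pr_{\mathcal{P}}(C\sqsubseteq D\mid\kappa)$ over $\mathcal{P}\in\mathrm{Mod}_{ME}(\mathcal{K})$. *)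

theory Defs
  imports Complex_Main
begin

datatype 'v pform =
    PVar 'v | PTop | PBot | PNot "'v pform"
  | PAnd "'v pform" "'v pform" | POr "'v pform" "'v pform" | PImp "'v pform" "'v pform"

type_synonym 'v tassign = "'v \<Rightarrow> bool"

fun psat :: "'v tassign \<Rightarrow> 'v pform \<Rightarrow> bool" where
  "psat v (PVar a) = v a"
| "psat v PTop = True"
| "psat v PBot = False"
| "psat v (PNot f) = (\<not> psat v f)"
| "psat v (PAnd f g) = (psat v f \<and> psat v g)"
| "psat v (POr f g) = (psat v f \<or> psat v g)"
| "psat v (PImp f g) = (psat v f \<longrightarrow> psat v g)"

definition is_distr :: "(('v::finite) tassign \<Rightarrow> real) \<Rightarrow> bool" where
  "is_distr P \<longleftrightarrow> (\<forall>v. 0 \<le> P v \<and> P v \<le> 1) \<and> (\<Sum>v\<in>UNIV. P v) = 1"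

definition prob :: "(('v::finite) tassign \<Rightarrow> real) \<Rightarrow> 'v pform \<Rightarrow> real" where
  "prob P f = (\<Sum>v\<in>{v. psat v f}. P v)"

definition cprob :: "(('v::finite) tassign \<Rightarrow> real) \<Rightarrow> 'v pform \<Rightarrow> 'v pform \<Rightarrow> real" where
  "cprob P f k = prob P (PAnd f k) / prob P k"

text \<open>A probabilistic constraint c0 + \<Sum>i c_i p(phi_i) \<ge> 0 is the pair (c0, [(c_1,phi_1),...]).\<close>
type_synonym 'v pconstr = "real \<times> (real \<times> 'v pform) list"

definition sat_constr :: "(('v::finite) tassign \<Rightarrow> real) \<Rightarrow> 'v pconstr \<Rightarrow> bool" where
  "sat_constr P c \<longleftrightarrow> fst c + (\<Sum>(ci, fi)\<leftarrow>snd c. ci * prob P fi) \<ge> 0"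

definition ModR :: "('v::finite) pconstr set \<Rightarrow> ('v tassign \<Rightarrow> real) set" where
  "ModR R = {P. is_distr P \<and> (\<forall>c\<in>R. sat_constr P c)}"

definition entropy :: "(('v::finite) tassign \<Rightarrow> real) \<Rightarrow> real" where
  "entropy P = - (\<Sum>v\<in>UNIV. P v * ln (P v))"

definition consistentR :: "('v::finite) pconstr set \<Rightarrow> bool" where
  "consistentR R \<longleftrightarrow> ModR R \<noteq> {}"

definition PME :: "('v::finite) pconstr set \<Rightarrow> ('v tassign \<Rightarrow> real)" where
  "PME R = (THE P. P \<in> ModR R \<and> (\<forall>Q\<in>ModR R. entropy Q \<le> entropy P))"

datatype ('c, 'r) concept =
    CAtom 'c | CNot "('c, 'r) concept" | CAnd "('c, 'r) concept" "('c, 'r) concept"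
  | CEx 'r "('c, 'r) concept"

type_synonym ('c, 'r, 'd) interp = "'d set \<times> ('c \<Rightarrow> 'd set) \<times> ('r \<Rightarrow> ('d \<times> 'd) set)"

definition wf_interp :: "('c, 'r, 'd) interp \<Rightarrow> bool" where
  "wf_interp I \<longleftrightarrow> (case I of (\<Delta>, A, R) \<Rightarrow>
     \<Delta> \<noteq> {} \<and> (\<forall>a. A a \<subseteq> \<Delta>) \<and> (\<forall>r. R r \<subseteq> \<Delta> \<times> \<Delta>))"

fun ext :: "('c, 'r, 'd) interp \<Rightarrow> ('c, 'r) concept \<Rightarrow> 'd set" where
  "ext (\<Delta>, A, R) (CAtom a) = A a"
| "ext (\<Delta>, A, R) (CNot C) = \<Delta> - ext (\<Delta>, A, R) C"
| "ext I (CAnd C D) = ext I C \<inter> ext I D"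
| "ext (\<Delta>, A, R) (CEx r C) = {x\<in>\<Delta>. \<exists>y. (x, y) \<in> R r \<and> y \<in> ext (\<Delta>, A, R) C}"

text \<open>L-GCI <C \<sqsubseteq> D : kappa> is the triple (C, D, kappa).\<close>
type_synonym ('c, 'r, 'v) gci = "('c, 'r) concept \<times> ('c, 'r) concept \<times> 'v pform"

type_synonym ('c, 'r, 'd, 'v) pworld = "('c, 'r, 'd) interp \<times> 'v tassign"

definition world_models :: "('c, 'r, 'd, 'v) pworld \<Rightarrow> ('c, 'r, 'v) gci \<Rightarrow> bool" where
  "world_models W g \<longleftrightarrow> (case g of (C, D, k) \<Rightarrow>
     \<not> psat (snd W) k \<or> ext (fst W) C \<subseteq> ext (fst W) D)"

definition Tw :: "('c, 'r, 'v) gci set \<Rightarrow> 'v tassign \<Rightarrow> (('c, 'r) concept \<times> ('c, 'r) concept) set" where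
  "Tw T w = {(C, D). \<exists>k. (C, D, k) \<in> T \<and> psat w k}"

definition classical_model :: "('c, 'r, 'd) interp \<Rightarrow> (('c, 'r) concept \<times> ('c, 'r) concept) set \<Rightarrow> bool" where
  "classical_model I S \<longleftrightarrow> wf_interp I \<and> (\<forall>(C, D)\<in>S. ext I C \<subseteq> ext I D)"

text \<open>Entailment and strong non-subsumption w.r.t. classical interpretations whose
  domains are subsets of the (arbitrary) type 'd.\<close>
definition entails :: "'d itself \<Rightarrow> (('c, 'r) concept \<times> ('c, 'r) concept) set
    \<Rightarrow> ('c, 'r) concept \<Rightarrow> ('c, 'r) concept \<Rightarrow> bool" where
  "entails _ S C D \<longleftrightarrow> (\<forall>I :: ('c, 'r, 'd) interp. classical_model I S \<longrightarrow> ext I C \<subseteq> ext I D)"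

definition strongly_non_subsumed :: "'d itself \<Rightarrow> (('c, 'r) concept \<times> ('c, 'r) concept) set
    \<Rightarrow> ('c, 'r) concept \<Rightarrow> ('c, 'r) concept \<Rightarrow> bool" where
  "strongly_non_subsumed _ S C D \<longleftrightarrow>
     (\<forall>I :: ('c, 'r, 'd) interp. classical_model I S \<longrightarrow> \<not> ext I C \<subseteq> ext I D)"

definition consequence_formula :: "'d itself \<Rightarrow> ('c, 'r, 'v) gci set
    \<Rightarrow> ('c, 'r) concept \<Rightarrow> ('c, 'r) concept \<Rightarrow> 'v pform \<Rightarrow> bool" where
  "consequence_formula d T C D f \<longleftrightarrow> (\<forall>w. psat w f \<longleftrightarrow> entails d (Tw T w) C D)"

definition nonsub_consequence_formula :: "'d itself \<Rightarrow> ('c, 'r, 'v) gci set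
    \<Rightarrow> ('c, 'r) concept \<Rightarrow> ('c, 'r) concept \<Rightarrow> 'v pform \<Rightarrow> bool" where
  "nonsub_consequence_formula d T C D f \<longleftrightarrow>
     (\<forall>w. psat w f \<longleftrightarrow> strongly_non_subsumed d (Tw T w) C D)"

type_synonym ('c, 'r, 'd, 'v) alcp_interp =
  "('c, 'r, 'd, 'v) pworld set \<times> (('c, 'r, 'd, 'v) pworld \<Rightarrow> real)"

definition wf_alcp :: "('c, 'r, 'd, 'v) alcp_interp \<Rightarrow> bool" where
  "wf_alcp P \<longleftrightarrow> (case P of (\<J>, p) \<Rightarrow>
     finite \<J> \<and> \<J> \<noteq> {} \<and> (\<forall>W\<in>\<J>. wf_interp (fst W))
     \<and> (\<forall>W\<in>\<J>. 0 \<le> p W) \<and> (\<Sum>W\<in>\<J>. p W) = 1)"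

definition induced_distr :: "('c, 'r, 'd, 'v) alcp_interp \<Rightarrow> 'v tassign \<Rightarrow> real" where
  "induced_distr P v = (\<Sum>W\<in>{W\<in>fst P. snd W = v}. snd P W)"

type_synonym ('c, 'r, 'v) kb = "'v pconstr set \<times> ('c, 'r, 'v) gci set"

definition ME_models :: "'d itself \<Rightarrow> ('c, 'r, 'v::finite) kb \<Rightarrow> ('c, 'r, 'd, 'v) alcp_interp set" where
  "ME_models _ K = {P. wf_alcp P \<and> (\<forall>W\<in>fst P. \<forall>g\<in>snd K. world_models W g)
                       \<and> induced_distr P = PME (fst K)}"

definition ME_consistent :: "'d itself \<Rightarrow> ('c, 'r, 'v::finite) kb \<Rightarrow> bool" where
  "ME_consistent d K \<longleftrightarrow> consistentR (fst K) \<and> ME_models d K \<noteq> {}"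

definition Pr_sub :: "('c, 'r, 'd, 'v) alcp_interp \<Rightarrow> ('c, 'r) concept \<Rightarrow> ('c, 'r) concept
    \<Rightarrow> 'v pform \<Rightarrow> real" where
  "Pr_sub P C D k =
     (\<Sum>W\<in>{W\<in>fst P. psat (snd W) k \<and> ext (fst W) C \<subseteq> ext (fst W) D}. snd P W)
     / (\<Sum>W\<in>{W\<in>fst P. psat (snd W) k}. snd P W)"

definition B_s :: "'d itself \<Rightarrow> ('c, 'r, 'v::finite) kb \<Rightarrow> ('c, 'r) concept \<Rightarrow> ('c, 'r) concept
    \<Rightarrow> 'v pform \<Rightarrow> real" where
  "B_s d K C D k = Inf ((\<lambda>P. Pr_sub P C D k) ` ME_models d K)"

definition B_c :: "'d itself \<Rightarrow> ('c, 'r, 'v::finite) kb \<Rightarrow> ('c, 'r) concept \<Rightarrow> ('c, 'r) concept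
    \<Rightarrow> 'v pform \<Rightarrow> real" where
  "B_c d K C D k = Sup ((\<lambda>P. Pr_sub P C D k) ` ME_models d K)"

end

theory Submission
  imports Defs
begin

text \<open>Every ME-model distributes exactly the mass of P^ME over truth assignments, so the
  probability of C \<sqsubseteq> D given \<kappa> is determined by which worlds satisfy C \<sqsubseteq> D.
  Worlds whose assignment satisfies \<phi> must satisfy it and worlds satisfying it cannot satisfy \<psi>,
  which gives P^ME(\<phi> | \<kappa>) \<le> Pr \<le> P^ME(\<not>\<psi> | \<kappa>) for every ME-model. Both bounds are attained:
  above every assignment of positive probability place a single world, chosen to violate
  C \<sqsubseteq> D whenever \<phi> fails (resp. to satisfy it whenever \<psi> fails).\<close>

definition world_mass :: "('c, 'r, 'd, 'v) alcp_interp \<Rightarrow> (('c, 'r, 'd, 'v) pworld \<Rightarrow> bool) \<Rightarrow> real" where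
  "world_mass P S = (\<Sum>W\<in>{W\<in>fst P. S W}. snd P W)"

lemma Pr_sub_eq_world_mass:
  "Pr_sub P C D k = world_mass P (\<lambda>W. psat (snd W) k \<and> ext (fst W) C \<subseteq> ext (fst W) D)
                    / world_mass P (\<lambda>W. psat (snd W) k)"
  by (simp add: Pr_sub_def world_mass_def)

lemma world_mass_mono:
  assumes "wf_alcp P" and "\<And>W. W \<in> fst P \<Longrightarrow> S W \<Longrightarrow> S' W"
  shows "world_mass P S \<le> world_mass P S'"
  unfolding world_mass_def
  by (rule sum_mono2) (use assms in \<open>auto simp: wf_alcp_def split: prod.splits\<close>)

lemma world_mass_nonneg: "wf_alcp P \<Longrightarrow> 0 \<le> world_mass P S"
  by (auto simp: world_mass_def wf_alcp_def intro!: sum_nonneg split: prod.splits)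

lemma world_mass_eq_sum_induced_distr:
  fixes P :: "('c, 'r, 'd, 'v::finite) alcp_interp"
  assumes "finite (fst P)"
  shows "world_mass P (\<lambda>W. S (snd W)) = (\<Sum>v\<in>{v. S v}. induced_distr P v)"
proof -
  have "(\<Sum>v\<in>{v. S v}. induced_distr P v)
      = (\<Sum>v\<in>{v. S v}. \<Sum>W\<in>{W\<in>{W\<in>fst P. S (snd W)}. snd W = v}. snd P W)"
    by (intro sum.cong refl) (auto simp: induced_distr_def intro!: sum.cong)
  also have "\<dots> = world_mass P (\<lambda>W. S (snd W))"
    unfolding world_mass_def by (rule sum.group) (use assms in auto)
  finally show ?thesis by simp
qed

lemma world_mass_psat_eq_prob:
  fixes P :: "('c, 'r, 'd, 'v::finite) alcp_interp"
  assumes "finite (fst P)"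
  shows "world_mass P (\<lambda>W. psat (snd W) f) = prob (induced_distr P) f"
  using world_mass_eq_sum_induced_distr[OF assms] by (simp add: prob_def)

lemma induced_distr_nonneg: "wf_alcp P \<Longrightarrow> 0 \<le> induced_distr P v"
  by (auto simp: wf_alcp_def induced_distr_def intro!: sum_nonneg split: prod.splits)

lemma sum_induced_distr:
  fixes P :: "('c, 'r, 'd, 'v::finite) alcp_interp"
  assumes "wf_alcp P"
  shows "(\<Sum>v\<in>UNIV. induced_distr P v) = 1"
proof -
  have "finite (fst P)" using assms by (auto simp: wf_alcp_def split: prod.splits)
  from world_mass_eq_sum_induced_distr[OF this, of "\<lambda>_. True"]
  show ?thesis using assms by (auto simp: world_mass_def wf_alcp_def split: prod.splits)
qed

lemma cprob_le_Pr_sub: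
  fixes P :: "('c, 'r, 'd, 'v::finite) alcp_interp"
  assumes "wf_alcp P"
    and "\<And>W. W \<in> fst P \<Longrightarrow> psat (snd W) \<chi> \<Longrightarrow> ext (fst W) C \<subseteq> ext (fst W) D"
  shows "cprob (induced_distr P) \<chi> \<kappa> \<le> Pr_sub P C D \<kappa>"
proof -
  have fin: "finite (fst P)" using assms(1) by (auto simp: wf_alcp_def split: prod.splits)
  have "world_mass P (\<lambda>W. psat (snd W) (PAnd \<chi> \<kappa>))
      \<le> world_mass P (\<lambda>W. psat (snd W) \<kappa> \<and> ext (fst W) C \<subseteq> ext (fst W) D)"
    by (rule world_mass_mono) (use assms in auto)
  moreover have "0 \<le> world_mass P (\<lambda>W. psat (snd W) \<kappa>)"
    using assms(1) by (rule world_mass_nonneg)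
  ultimately show ?thesis
    by (simp add: Pr_sub_eq_world_mass cprob_def world_mass_psat_eq_prob[OF fin, symmetric]
        divide_right_mono)
qed

lemma Pr_sub_le_cprob:
  fixes P :: "('c, 'r, 'd, 'v::finite) alcp_interp"
  assumes "wf_alcp P"
    and "\<And>W. W \<in> fst P \<Longrightarrow> ext (fst W) C \<subseteq> ext (fst W) D \<Longrightarrow> psat (snd W) \<chi>"
  shows "Pr_sub P C D \<kappa> \<le> cprob (induced_distr P) \<chi> \<kappa>"
proof -
  have fin: "finite (fst P)" using assms(1) by (auto simp: wf_alcp_def split: prod.splits)
  have "world_mass P (\<lambda>W. psat (snd W) \<kappa> \<and> ext (fst W) C \<subseteq> ext (fst W) D)
      \<le> world_mass P (\<lambda>W. psat (snd W) (PAnd \<chi> \<kappa>))"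
    by (rule world_mass_mono) (use assms in auto)
  moreover have "0 \<le> world_mass P (\<lambda>W. psat (snd W) \<kappa>)"
    using assms(1) by (rule world_mass_nonneg)
  ultimately show ?thesis
    by (simp add: Pr_sub_eq_world_mass cprob_def world_mass_psat_eq_prob[OF fin, symmetric]
        divide_right_mono)
qed

lemma prob_and_not: "prob Q (PAnd (PNot f) k) = prob Q k - prob Q (PAnd f k)"
proof -
  have "prob Q k = sum Q ({v. psat v k} \<inter> {v. psat v f}) + sum Q ({v. psat v k} - {v. psat v f})"
    unfolding prob_def by (rule sum.Int_Diff) simp
  moreover have "{v. psat v k} \<inter> {v. psat v f} = {v. psat v (PAnd f k)}"
    and "{v. psat v k} - {v. psat v f} = {v. psat v (PAnd (PNot f) k)}" by auto
  ultimately show ?thesis by (simp add: prob_def)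
qed

lemma cprob_not: "prob Q k \<noteq> 0 \<Longrightarrow> cprob Q (PNot f) k = 1 - cprob Q f k"
  by (simp add: cprob_def prob_and_not diff_divide_distrib)

lemma ME_models_wf_alcp: "P \<in> ME_models d K \<Longrightarrow> wf_alcp P"
  by (simp add: ME_models_def)

lemma ME_models_induced_distr: "P \<in> ME_models d K \<Longrightarrow> induced_distr P = PME (fst K)"
  by (simp add: ME_models_def)

lemma ME_model_world_classical_model:
  assumes "P \<in> ME_models d K" and "W \<in> fst P"
  shows "classical_model (fst W) (Tw (snd K) (snd W))"
proof -
  have "wf_interp (fst W)" and models: "\<forall>g\<in>snd K. world_models W g"
    using assms by (auto simp: ME_models_def wf_alcp_def split: prod.splits)
  moreover have "ext (fst W) C \<subseteq> ext (fst W) D" if "(C, D) \<in> Tw (snd K) (snd W)" for C D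
    using that models by (auto simp: Tw_def world_models_def)
  ultimately show ?thesis by (auto simp: classical_model_def)
qed

lemma ME_model_consequence_formula_sub:
  fixes P :: "('c, 'r, 'd, 'v::finite) alcp_interp"
  assumes "consequence_formula TYPE('d) (snd K) C D \<phi>"
    and "P \<in> ME_models TYPE('d) K" and "W \<in> fst P" and "psat (snd W) \<phi>"
  shows "ext (fst W) C \<subseteq> ext (fst W) D"
  using assms(1,4) ME_model_world_classical_model[OF assms(2,3)]
  unfolding consequence_formula_def entails_def by blast

lemma ME_model_sub_not_nonsub_formula:
  fixes P :: "('c, 'r, 'd, 'v::finite) alcp_interp"
  assumes "nonsub_consequence_formula TYPE('d) (snd K) C D \<psi>"
    and "P \<in> ME_models TYPE('d) K" and "W \<in> fst P" and "ext (fst W) C \<subseteq> ext (fst W) D"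
  shows "psat (snd W) (PNot \<psi>)"
  using assms(1,4) ME_model_world_classical_model[OF assms(2,3)]
  unfolding nonsub_consequence_formula_def strongly_non_subsumed_def by (simp only: psat.simps) blast

lemma ME_model_Tw_satisfiable:
  fixes P :: "('c, 'r, 'd, 'v::finite) alcp_interp"
  assumes "P \<in> ME_models TYPE('d) K" and "PME (fst K) v > 0"
  shows "\<exists>I :: ('c, 'r, 'd) interp. classical_model I (Tw (snd K) v)"
proof -
  have "{W\<in>fst P. snd W = v} \<noteq> {}"
  proof
    assume "{W\<in>fst P. snd W = v} = {}"
    hence "induced_distr P v = 0" by (simp only: induced_distr_def sum.empty)
    with assms show False by (simp add: ME_models_induced_distr)
  qed
  then obtain W where "W \<in> fst P" "snd W = v" by auto
  thus ?thesis using ME_model_world_classical_model[OF assms(1)] by blast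
qed

text \<open>Assignments of probability zero carry no world, so only those of positive
  probability need a model of their TBox.\<close>
lemma graph_ME_model:
  fixes f :: "'v::finite tassign \<Rightarrow> ('c, 'r, 'd) interp" and K :: "('c, 'r, 'v) kb"
  defines "Q \<equiv> PME (fst K)"
  assumes nonneg: "\<And>v. 0 \<le> Q v" and sum_one: "(\<Sum>v\<in>UNIV. Q v) = 1"
    and models: "\<And>v. Q v > 0 \<Longrightarrow> classical_model (f v) (Tw (snd K) v)"
  shows "((\<lambda>v. (f v, v)) ` {v. Q v > 0}, \<lambda>W. Q (snd W)) \<in> ME_models TYPE('d) K"
proof -
  define A where "A = {v. Q v > 0}"
  define J where "J = (\<lambda>v. (f v, v)) ` A"
  have "sum Q A = sum Q UNIV"
    by (rule sum.mono_neutral_left) (use nonneg in \<open>auto simp: A_def intro: antisym\<close>)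
  hence mass_A: "sum Q A = 1" using sum_one by simp
  have "inj_on (\<lambda>v. (f v, v)) A" by (auto simp: inj_on_def)
  hence "(\<Sum>W\<in>J. Q (snd W)) = 1"
    unfolding J_def by (simp add: sum.reindex mass_A)
  moreover have "A \<noteq> {}" using mass_A by auto
  ultimately have wf: "wf_alcp (J, \<lambda>W. Q (snd W))"
    using models nonneg by (auto simp: wf_alcp_def J_def A_def classical_model_def)
  have "world_models (f v, v) g" if "Q v > 0" "g \<in> snd K" for v g
    using models[OF that(1)] that(2)
    by (cases g) (auto simp: world_models_def classical_model_def Tw_def)
  hence worlds: "\<forall>W\<in>J. \<forall>g\<in>snd K. world_models W g" by (auto simp: J_def A_def)
  have "{W\<in>J. snd W = v} = (if Q v > 0 then {(f v, v)} else {})" for v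
    by (auto simp: J_def A_def)
  hence "induced_distr (J, \<lambda>W. Q (snd W)) = Q"
    using nonneg by (auto simp: induced_distr_def fun_eq_iff intro: antisym)
  with wf worlds show ?thesis by (simp add: ME_models_def J_def A_def Q_def)
qed

lemma ME_model_select:
  fixes P0 :: "('c, 'r, 'd, 'v::finite) alcp_interp"
  assumes P0: "P0 \<in> ME_models TYPE('d) K"
    and choice: "\<And>v. PME (fst K) v > 0 \<Longrightarrow>
                   \<exists>I :: ('c, 'r, 'd) interp. classical_model I (Tw (snd K) v) \<and> R v I"
  obtains P :: "('c, 'r, 'd, 'v) alcp_interp"
  where "P \<in> ME_models TYPE('d) K" and "\<And>W. W \<in> fst P \<Longrightarrow> R (snd W) (fst W)"
proof -
  obtain f :: "'v tassign \<Rightarrow> ('c, 'r, 'd) interp" where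
    f: "\<And>v. PME (fst K) v > 0 \<Longrightarrow> classical_model (f v) (Tw (snd K) v) \<and> R v (f v)"
    using choice by metis
  have "\<And>v. 0 \<le> PME (fst K) v" "(\<Sum>v\<in>UNIV. PME (fst K) v) = 1"
    using induced_distr_nonneg sum_induced_distr ME_models_induced_distr[OF P0]
      ME_models_wf_alcp[OF P0] by metis+
  from graph_ME_model[OF this, of f] f have
    "((\<lambda>v. (f v, v)) ` {v. PME (fst K) v > 0}, \<lambda>W. PME (fst K) (snd W)) \<in> ME_models TYPE('d) K"
    by blast
  with f show ?thesis by (intro that) auto
qed

lemma ME_model_sub_only_on_consequence_formula:
  fixes K :: "('c, 'r, 'v::finite) kb"
  assumes "ME_consistent TYPE('d) K" and "consequence_formula TYPE('d) (snd K) C D \<phi>"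
  obtains P :: "('c, 'r, 'd, 'v) alcp_interp"
  where "P \<in> ME_models TYPE('d) K"
    and "\<And>W. W \<in> fst P \<Longrightarrow> ext (fst W) C \<subseteq> ext (fst W) D \<Longrightarrow> psat (snd W) \<phi>"
proof -
  obtain P0 :: "('c, 'r, 'd, 'v) alcp_interp" where P0: "P0 \<in> ME_models TYPE('d) K"
    using assms(1) by (auto simp: ME_consistent_def)
  show ?thesis
  proof (rule ME_model_select[OF P0, of "\<lambda>v I. ext I C \<subseteq> ext I D \<longrightarrow> psat v \<phi>"])
    fix v assume "PME (fst K) v > 0"
    then show "\<exists>I :: ('c, 'r, 'd) interp. classical_model I (Tw (snd K) v)
                 \<and> (ext I C \<subseteq> ext I D \<longrightarrow> psat v \<phi>)"
      using ME_model_Tw_satisfiable[OF P0] assms(2)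
      unfolding consequence_formula_def entails_def by blast
  qed (use that in auto)
qed

lemma ME_model_sub_off_nonsub_formula:
  fixes K :: "('c, 'r, 'v::finite) kb"
  assumes "ME_consistent TYPE('d) K" and "nonsub_consequence_formula TYPE('d) (snd K) C D \<psi>"
  obtains P :: "('c, 'r, 'd, 'v) alcp_interp"
  where "P \<in> ME_models TYPE('d) K"
    and "\<And>W. W \<in> fst P \<Longrightarrow> psat (snd W) (PNot \<psi>) \<Longrightarrow> ext (fst W) C \<subseteq> ext (fst W) D"
proof -
  obtain P0 :: "('c, 'r, 'd, 'v) alcp_interp" where P0: "P0 \<in> ME_models TYPE('d) K"
    using assms(1) by (auto simp: ME_consistent_def)
  show ?thesis
  proof (rule ME_model_select[OF P0, of "\<lambda>v I. psat v (PNot \<psi>) \<longrightarrow> ext I C \<subseteq> ext I D"])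
    fix v assume "PME (fst K) v > 0"
    then show "\<exists>I :: ('c, 'r, 'd) interp. classical_model I (Tw (snd K) v)
                 \<and> (psat v (PNot \<psi>) \<longrightarrow> ext I C \<subseteq> ext I D)"
      using ME_model_Tw_satisfiable[OF P0] assms(2)
      unfolding nonsub_consequence_formula_def strongly_non_subsumed_def psat.simps by blast
  qed (use that in auto)
qed

theorem theorem5:
  fixes K :: "('c, 'r, 'v::finite) kb"
    and C D :: "('c, 'r) concept"
    and \<phi> \<psi> \<kappa> :: "'v pform"
  assumes "finite (snd K)"
    and "ME_consistent TYPE('d) K"
    and "consequence_formula TYPE('d) (snd K) C D \<phi>"
    and "nonsub_consequence_formula TYPE('d) (snd K) C D \<psi>"
    and "prob (PME (fst K)) \<kappa> > 0"
  shows "B_s TYPE('d) K C D \<kappa> = cprob (PME (fst K)) \<phi> \<kappa>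
       \<and> B_c TYPE('d) K C D \<kappa> = 1 - cprob (PME (fst K)) \<psi> \<kappa>"
proof -
  let ?M = "ME_models TYPE('d) K :: ('c, 'r, 'd, 'v) alcp_interp set"
  have lower: "cprob (PME (fst K)) \<phi> \<kappa> \<le> Pr_sub P C D \<kappa>" if "P \<in> ?M" for P
    using cprob_le_Pr_sub[OF ME_models_wf_alcp[OF that]] ME_models_induced_distr[OF that]
      ME_model_consequence_formula_sub[OF assms(3) that] by metis
  have upper: "Pr_sub P C D \<kappa> \<le> cprob (PME (fst K)) (PNot \<psi>) \<kappa>" if "P \<in> ?M" for P
    using Pr_sub_le_cprob[OF ME_models_wf_alcp[OF that]] ME_models_induced_distr[OF that]
      ME_model_sub_not_nonsub_formula[OF assms(4) that] by metis
  obtain P1 where P1: "P1 \<in> ?M" "Pr_sub P1 C D \<kappa> = cprob (PME (fst K)) \<phi> \<kappa>"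
    using ME_model_sub_only_on_consequence_formula[OF assms(2,3)] lower
      Pr_sub_le_cprob[OF ME_models_wf_alcp] ME_models_induced_distr by (metis antisym)
  obtain P2 where P2: "P2 \<in> ?M" "Pr_sub P2 C D \<kappa> = cprob (PME (fst K)) (PNot \<psi>) \<kappa>"
    using ME_model_sub_off_nonsub_formula[OF assms(2,4)] upper
      cprob_le_Pr_sub[OF ME_models_wf_alcp] ME_models_induced_distr by (metis antisym)
  have "B_s TYPE('d) K C D \<kappa> = cprob (PME (fst K)) \<phi> \<kappa>"
    unfolding B_s_def by (rule cInf_eq_minimum) (use P1 lower in \<open>force+\<close>)
  moreover have "B_c TYPE('d) K C D \<kappa> = cprob (PME (fst K)) (PNot \<psi>) \<kappa>"
    unfolding B_c_def by (rule cSup_eq_maximum) (use P2 upper in \<open>force+\<close>)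
  ultimately show ?thesis using cprob_not[of "PME (fst K)" \<kappa> \<psi>] assms(5) by simp
qed

end
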